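(* Let $p$ be a prime and $G$ a group of order $mp$ with $p\nmid m$, having a unique Sylow $p$-subgroup $P$. Suppose $G$ has a subgroup $M$ of order $m$ such that $p\nmid|\mathrm{Aut}(M)|$. Let $N$ be a regular subgroup of $\mathrm{Hol}(G)$ and, for $g\in G$, let $\nu(g)$ be the unique element of $N$ with $1^{\nu(g)}=g$; write $\nu(P)=\{\nu(x):x\in P\}$. Then: (1) $\nu(P)$ is a subgroup of $N$, hence a Sylow $p$-subgroup of $N$; (2) $\nu(P)\in\{\rho(P),\lambda(P)\}$; (3) $[\rho(G),\nu(P)]\le\nu(P)$.
   Context: Permutations act on the right, written exponentially. $S(G)$ is the permutation group of the set $G$; $\rho(g):x\mapsto xg$ and $\lambda(g):x\mapsto gx$; $\mathrm{Hol}(G)=N_{S(G)}(\rho(G))=\mathrm{Aut}(G)\rho(G)$, which also contains $\lambda(G)$. A subgroup of $S(G)$ is regular if it acts transitively with trivial point stabilisers. Commutators in $S(G)$: $[x,y]=x^{-1}y^{-1}xy$. *)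

theory Defs
  imports "HOL-Algebra.Algebra"
begin

text \<open>Symmetric group S(U) with permutations acting on the right:
  the product s * t means first s, then t, i.e. the function t o s.\<close>
definition SymR :: "'a set \<Rightarrow> ('a \<Rightarrow> 'a) monoid" where
  "SymR U = \<lparr>carrier = Bij U, Group.monoid.mult = (\<lambda>s t. compose U t s), Group.monoid.one = (\<lambda>x\<in>U. x)\<rparr>"

definition rho :: "('a, 'b) monoid_scheme \<Rightarrow> 'a \<Rightarrow> ('a \<Rightarrow> 'a)" where
  "rho G g = (\<lambda>x\<in>carrier G. x \<otimes>\<^bsub>G\<^esub> g)"

definition lam :: "('a, 'b) monoid_scheme \<Rightarrow> 'a \<Rightarrow> ('a \<Rightarrow> 'a)" where
  "lam G g = (\<lambda>x\<in>carrier G. g \<otimes>\<^bsub>G\<^esub> x)"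

text \<open>Hol(G) = normaliser of rho(G) in S(G).\<close>
definition Hol :: "('a, 'b) monoid_scheme \<Rightarrow> ('a \<Rightarrow> 'a) set" where
  "Hol G = {s \<in> carrier (SymR (carrier G)).
     (\<lambda>r. inv\<^bsub>SymR (carrier G)\<^esub> s \<otimes>\<^bsub>SymR (carrier G)\<^esub> r \<otimes>\<^bsub>SymR (carrier G)\<^esub> s) ` (rho G ` carrier G)
       = rho G ` carrier G}"

definition regular_subgroup :: "'a set \<Rightarrow> ('a \<Rightarrow> 'a) set \<Rightarrow> bool" where
  "regular_subgroup U N \<longleftrightarrow> subgroup N (SymR U)
     \<and> (\<forall>x\<in>U. \<forall>y\<in>U. \<exists>s\<in>N. s x = y)
     \<and> (\<forall>x\<in>U. \<forall>s\<in>N. s x = x \<longrightarrow> s = \<one>\<^bsub>SymR U\<^esub>)"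

definition nu :: "('a, 'b) monoid_scheme \<Rightarrow> ('a \<Rightarrow> 'a) set \<Rightarrow> 'a \<Rightarrow> ('a \<Rightarrow> 'a)" where
  "nu G N g = (THE s. s \<in> N \<and> s \<one>\<^bsub>G\<^esub> = g)"

definition commR :: "('a, 'b) monoid_scheme \<Rightarrow> 'a \<Rightarrow> 'a \<Rightarrow> 'a" where
  "commR H x y = inv\<^bsub>H\<^esub> x \<otimes>\<^bsub>H\<^esub> inv\<^bsub>H\<^esub> y \<otimes>\<^bsub>H\<^esub> x \<otimes>\<^bsub>H\<^esub> y"

definition comm_subgroup :: "('a, 'b) monoid_scheme \<Rightarrow> 'a set \<Rightarrow> 'a set \<Rightarrow> 'a set" where
  "comm_subgroup H A B = generate H {commR H a b | a b. a \<in> A \<and> b \<in> B}"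

definition sylow_subgroup :: "nat \<Rightarrow> 'a set \<Rightarrow> ('a, 'b) monoid_scheme \<Rightarrow> bool" where
  "sylow_subgroup p H G \<longleftrightarrow> subgroup H G \<and> (\<exists>k. card H = p ^ k)
     \<and> \<not> p dvd (order G div card H)"

end

theory Submission
  imports Defs "HOL-Number_Theory.Residues"
begin

text \<open>Write \<open>\<nu>(g) = \<alpha> \<rho>(g)\<close> with \<open>\<alpha>\<close> an automorphism of \<open>G\<close>. The normal Sylow subgroup \<open>P\<close>
  is characteristic and cyclic of order \<open>p\<close>, so \<open>\<nu>(g)\<nu>(h) = \<nu>(\<alpha>\<^sub>h(g) h)\<close> makes \<open>\<nu>(P)\<close> a
  subgroup of order \<open>p\<close>. For \<open>g \<in> P\<close> the automorphism \<open>\<alpha>\<^sub>g\<close> has order dividing \<open>p\<close>: by Fermat it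
  fixes \<open>P\<close> pointwise, and since \<open>p \<nmid> |Aut(M)|\<close> it induces the identity on \<open>M \<cong> G/P\<close>.
  Then \<open>x \<mapsto> x\<^sup>-\<^sup>1 \<alpha>\<^sub>g(x)\<close> is a crossed homomorphism \<open>M \<rightarrow> P\<close>, principal by coprimality, so
  \<open>\<alpha>\<^sub>g\<close> is conjugation by some \<open>c \<in> P\<close> and \<open>\<nu>(g) = \<lambda>(c) \<rho>(c\<^sup>-\<^sup>1 g)\<close>. If \<open>P\<close> is not central
  the two factors are uniquely determined and depend homomorphically on \<open>g\<close>; conjugating by
  \<open>\<nu>(h)\<close> for an \<open>h\<close> not centralising \<open>P\<close> shows that one factor map is trivial, giving
  \<open>\<nu>(P) = \<rho>(P)\<close> or \<open>\<nu>(P) = \<lambda>(P)\<close>. Part (3) follows since \<open>P \<unlhd> G\<close> and \<open>\<rho>(G)\<close> centralises \<open>\<lambda>(G)\<close>.\<close>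

lemma SymR_carrier: "carrier (SymR U) = Bij U"
  by (simp add: SymR_def)

lemma SymR_one: "\<one>\<^bsub>SymR U\<^esub> = (\<lambda>x\<in>U. x)"
  by (simp add: SymR_def)

lemma SymR_mult_apply: "x \<in> U \<Longrightarrow> (s \<otimes>\<^bsub>SymR U\<^esub> t) x = t (s x)"
  by (simp add: SymR_def compose_def)

lemma SymR_group: "group (SymR U)"
proof (rule groupI)
  fix x y assume "x \<in> carrier (SymR U)" "y \<in> carrier (SymR U)"
  thus "x \<otimes>\<^bsub>SymR U\<^esub> y \<in> carrier (SymR U)" by (simp add: SymR_def compose_Bij)
next
  show "\<one>\<^bsub>SymR U\<^esub> \<in> carrier (SymR U)" by (simp add: SymR_def id_Bij)
next
  fix x y z assume "x \<in> carrier (SymR U)" "y \<in> carrier (SymR U)" "z \<in> carrier (SymR U)"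
  thus "x \<otimes>\<^bsub>SymR U\<^esub> y \<otimes>\<^bsub>SymR U\<^esub> z = x \<otimes>\<^bsub>SymR U\<^esub> (y \<otimes>\<^bsub>SymR U\<^esub> z)"
    by (simp add: SymR_def compose_assoc Bij_imp_funcset)
next
  fix x assume "x \<in> carrier (SymR U)"
  thus "\<one>\<^bsub>SymR U\<^esub> \<otimes>\<^bsub>SymR U\<^esub> x = x"
    by (simp add: SymR_def) (metis compose_Id Bij_imp_funcset Bij_imp_extensional)
next
  fix x assume "x \<in> carrier (SymR U)"
  hence x: "x \<in> Bij U" by (simp add: SymR_def)
  have "(\<lambda>y\<in>U. inv_into U x y) \<in> carrier (SymR U)"
    using restrict_inv_into_Bij[OF x] by (simp add: SymR_def)
  moreover have "(\<lambda>y\<in>U. inv_into U x y) \<otimes>\<^bsub>SymR U\<^esub> x = \<one>\<^bsub>SymR U\<^esub>"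
    using x compose_id_inv_into[of x U] by (simp add: SymR_def Bij_def bij_betw_def)
  ultimately show "\<exists>y\<in>carrier (SymR U). y \<otimes>\<^bsub>SymR U\<^esub> x = \<one>\<^bsub>SymR U\<^esub>" by blast
qed

interpretation SymR: group "SymR U" for U
  by (rule SymR_group)

lemma SymR_apply_closed: "s \<in> carrier (SymR U) \<Longrightarrow> x \<in> U \<Longrightarrow> s x \<in> U"
  by (auto simp: SymR_carrier Bij_def bij_betw_def)

lemma SymR_inv_apply_closed: "s \<in> carrier (SymR U) \<Longrightarrow> x \<in> U \<Longrightarrow> (inv\<^bsub>SymR U\<^esub> s) x \<in> U"
  by (rule SymR_apply_closed[OF SymR.inv_closed])

lemma SymR_inv_apply_left:
  assumes "s \<in> carrier (SymR U)" "x \<in> U"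
  shows "(inv\<^bsub>SymR U\<^esub> s) (s x) = x"
proof -
  have "(inv\<^bsub>SymR U\<^esub> s) (s x) = (s \<otimes>\<^bsub>SymR U\<^esub> inv\<^bsub>SymR U\<^esub> s) x"
    by (rule SymR_mult_apply[OF assms(2), symmetric])
  thus ?thesis using assms by (simp add: SymR_one)
qed

lemma SymR_inv_apply_right:
  assumes "s \<in> carrier (SymR U)" "x \<in> U"
  shows "s ((inv\<^bsub>SymR U\<^esub> s) x) = x"
proof -
  have "s ((inv\<^bsub>SymR U\<^esub> s) x) = (inv\<^bsub>SymR U\<^esub> s \<otimes>\<^bsub>SymR U\<^esub> s) x"
    by (rule SymR_mult_apply[OF assms(2), symmetric])
  thus ?thesis using assms by (simp add: SymR_one)
qed

lemma SymR_eqI: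
  "s \<in> carrier (SymR U) \<Longrightarrow> t \<in> carrier (SymR U) \<Longrightarrow> (\<And>x. x \<in> U \<Longrightarrow> s x = t x) \<Longrightarrow> s = t"
  by (auto simp: SymR_carrier Bij_def intro: extensionalityI)

lemma SymR_memI: "f \<in> extensional U \<Longrightarrow> bij_betw f U U \<Longrightarrow> f \<in> carrier (SymR U)"
  by (simp add: SymR_carrier Bij_def)

context group
begin

lemma m_inv_cancel_left [simp]: "x \<in> carrier G \<Longrightarrow> y \<in> carrier G \<Longrightarrow> x \<otimes> (inv x \<otimes> y) = y"
  by (simp add: m_assoc[symmetric])

lemma inv_m_cancel_left [simp]: "x \<in> carrier G \<Longrightarrow> y \<in> carrier G \<Longrightarrow> inv x \<otimes> (x \<otimes> y) = y"
  by (simp add: m_assoc[symmetric])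

lemma rho_apply [simp]: "x \<in> carrier G \<Longrightarrow> rho G g x = x \<otimes> g"
  by (simp add: rho_def)

lemma lam_apply [simp]: "x \<in> carrier G \<Longrightarrow> lam G g x = g \<otimes> x"
  by (simp add: lam_def)

lemma rho_in_SymR:
  assumes g: "g \<in> carrier G"
  shows "rho G g \<in> carrier (SymR (carrier G))"
proof (rule SymR_memI)
  show "rho G g \<in> extensional (carrier G)" by (simp add: rho_def)
  have "carrier G \<subseteq> rho G g ` carrier G"
  proof
    fix x assume x: "x \<in> carrier G"
    hence "x = rho G g (x \<otimes> inv g)" using g by (simp add: m_assoc)
    thus "x \<in> rho G g ` carrier G" using x g by blast
  qed
  thus "bij_betw (rho G g) (carrier G) (carrier G)"
    using g by (auto simp: bij_betw_def inj_on_def)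
qed

lemma lam_in_SymR:
  assumes g: "g \<in> carrier G"
  shows "lam G g \<in> carrier (SymR (carrier G))"
proof (rule SymR_memI)
  show "lam G g \<in> extensional (carrier G)" by (simp add: lam_def)
  have "carrier G \<subseteq> lam G g ` carrier G"
  proof
    fix x assume x: "x \<in> carrier G"
    hence "x = lam G g (inv g \<otimes> x)" using g by simp
    thus "x \<in> lam G g ` carrier G" using x g by blast
  qed
  thus "bij_betw (lam G g) (carrier G) (carrier G)"
    using g by (auto simp: bij_betw_def inj_on_def)
qed

lemma rho_mult:
  "g \<in> carrier G \<Longrightarrow> h \<in> carrier G \<Longrightarrow>
    rho G g \<otimes>\<^bsub>SymR (carrier G)\<^esub> rho G h = rho G (g \<otimes> h)"
  by (rule SymR_eqI) (auto simp: rho_in_SymR SymR_mult_apply m_assoc intro: SymR.m_closed)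

lemma rho_lam_commute:
  "g \<in> carrier G \<Longrightarrow> h \<in> carrier G \<Longrightarrow>
    rho G g \<otimes>\<^bsub>SymR (carrier G)\<^esub> lam G h = lam G h \<otimes>\<^bsub>SymR (carrier G)\<^esub> rho G g"
  by (rule SymR_eqI)
    (auto simp: lam_in_SymR rho_in_SymR SymR_mult_apply m_assoc intro: SymR.m_closed)

lemma rho_one: "rho G \<one> = \<one>\<^bsub>SymR (carrier G)\<^esub>"
  by (rule SymR_eqI[OF rho_in_SymR SymR.one_closed]) (simp_all add: SymR_one)

lemma rho_inv: "g \<in> carrier G \<Longrightarrow> inv\<^bsub>SymR (carrier G)\<^esub> (rho G g) = rho G (inv g)"
  by (rule SymR.inv_equality) (auto simp: rho_mult rho_in_SymR rho_one)

lemma Hol_SymR: "s \<in> Hol G \<Longrightarrow> s \<in> carrier (SymR (carrier G))"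
  by (simp add: Hol_def)

lemma Hol_apply_closed: "s \<in> Hol G \<Longrightarrow> x \<in> carrier G \<Longrightarrow> s x \<in> carrier G"
  by (rule SymR_apply_closed[OF Hol_SymR])

lemma Hol_apply_mult:
  assumes s: "s \<in> Hol G" and x: "x \<in> carrier G" and y: "y \<in> carrier G"
  shows "s (x \<otimes> y) = s x \<otimes> inv (s \<one>) \<otimes> s y"
proof -
  have sS: "s \<in> carrier (SymR (carrier G))" using Hol_SymR[OF s] .
  have "inv\<^bsub>SymR (carrier G)\<^esub> s \<otimes>\<^bsub>SymR (carrier G)\<^esub> rho G y \<otimes>\<^bsub>SymR (carrier G)\<^esub> s
      \<in> rho G ` carrier G"
    using s y unfolding Hol_def by blast
  then obtain g where g: "g \<in> carrier G"
    and eq: "inv\<^bsub>SymR (carrier G)\<^esub> s \<otimes>\<^bsub>SymR (carrier G)\<^esub> rho G y \<otimes>\<^bsub>SymR (carrier G)\<^esub> s = rho G g"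
    by blast
  have commute: "rho G y \<otimes>\<^bsub>SymR (carrier G)\<^esub> s = s \<otimes>\<^bsub>SymR (carrier G)\<^esub> rho G g"
    using sS rho_in_SymR[OF y] by (simp flip: eq add: SymR.m_assoc[symmetric])
  have shift: "s (z \<otimes> y) = s z \<otimes> g" if z: "z \<in> carrier G" for z
  proof -
    have "(rho G y \<otimes>\<^bsub>SymR (carrier G)\<^esub> s) z = (s \<otimes>\<^bsub>SymR (carrier G)\<^esub> rho G g) z"
      by (simp only: commute)
    thus ?thesis using z sS by (simp add: SymR_mult_apply SymR_apply_closed)
  qed
  have s1: "s \<one> \<in> carrier G" using sS by (simp add: SymR_apply_closed)
  have "g = inv (s \<one>) \<otimes> s y" using shift[of \<one>] y s1 g by simp
  thus ?thesis using shift[OF x] x s1 sS y by (simp add: m_assoc SymR_apply_closed)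
qed

definition conjugate :: "'a \<Rightarrow> 'a \<Rightarrow> 'a" where
  "conjugate g x = inv g \<otimes> x \<otimes> g"

lemma conjugate_hom: "g \<in> carrier G \<Longrightarrow> conjugate g \<in> hom G G"
  by (rule homI) (simp_all add: conjugate_def m_assoc)

lemma conjugate_inj: "g \<in> carrier G \<Longrightarrow> inj_on (conjugate g) (carrier G)"
  by (rule inj_onI) (simp add: conjugate_def m_assoc)

lemma card_subgroup_dvd:
  assumes H: "subgroup H G" and K: "subgroup K G" and KH: "K \<subseteq> H"
  shows "card K dvd card H"
proof -
  interpret H: group "G\<lparr>carrier := H\<rparr>" using subgroup.subgroup_is_group[OF H is_group] .
  have "card (rcosets\<^bsub>G\<lparr>carrier := H\<rparr>\<^esub> K) * card K = card H"
    using H.lagrange[OF subgroup_incl[OF K H KH]] by (simp add: order_def)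
  thus ?thesis by (metis dvd_triv_right)
qed

text \<open>Every \<open>s \<in> Hol G\<close> is \<open>x \<mapsto> hol_aut s x \<otimes> s \<one>\<close>, an automorphism followed by \<open>\<rho>(s \<one>)\<close>.\<close>

definition hol_aut :: "('a \<Rightarrow> 'a) \<Rightarrow> 'a \<Rightarrow> 'a" where
  "hol_aut s x = s x \<otimes> inv (s \<one>)"

lemma hol_aut_closed: "s \<in> Hol G \<Longrightarrow> x \<in> carrier G \<Longrightarrow> hol_aut s x \<in> carrier G"
  by (simp add: hol_aut_def Hol_apply_closed)

lemma Hol_apply: "s \<in> Hol G \<Longrightarrow> x \<in> carrier G \<Longrightarrow> s x = hol_aut s x \<otimes> s \<one>"
  by (simp add: hol_aut_def Hol_apply_closed m_assoc)

lemma hol_aut_one: "s \<in> Hol G \<Longrightarrow> hol_aut s \<one> = \<one>"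
  by (simp add: hol_aut_def Hol_apply_closed)

lemma hol_aut_mult:
  assumes s: "s \<in> Hol G" and x: "x \<in> carrier G" and y: "y \<in> carrier G"
  shows "hol_aut s (x \<otimes> y) = hol_aut s x \<otimes> hol_aut s y"
  using Hol_apply_mult[OF s x y] s x y by (simp add: hol_aut_def Hol_apply_closed m_assoc)

lemma hol_aut_hom: "s \<in> Hol G \<Longrightarrow> hol_aut s \<in> hom G G"
  by (rule homI) (simp_all add: hol_aut_closed hol_aut_mult)

lemma hol_aut_inj: assumes s: "s \<in> Hol G" shows "inj_on (hol_aut s) (carrier G)"
proof (rule inj_onI)
  fix x y assume x: "x \<in> carrier G" and y: "y \<in> carrier G" and e: "hol_aut s x = hol_aut s y"
  have "s x = s y" using Hol_apply[OF s x] Hol_apply[OF s y] e by simp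
  moreover have "inj_on s (carrier G)" using Hol_SymR[OF s] by (simp add: SymR_carrier Bij_def bij_betw_def)
  ultimately show "x = y" using x y by (simp add: inj_on_def)
qed

lemma hol_aut_mult_SymR:
  assumes s: "s \<in> Hol G" and t: "t \<in> Hol G" and x: "x \<in> carrier G"
  shows "hol_aut (s \<otimes>\<^bsub>SymR (carrier G)\<^esub> t) x = hol_aut t (hol_aut s x)"
proof -
  have c: "hol_aut s x \<in> carrier G" "s \<one> \<in> carrier G" "t \<one> \<in> carrier G"
    "hol_aut t (hol_aut s x) \<in> carrier G" "hol_aut t (s \<one>) \<in> carrier G"
    using s t x Hol_apply_closed hol_aut_closed by auto
  have "(s \<otimes>\<^bsub>SymR (carrier G)\<^esub> t) x = t (hol_aut s x \<otimes> s \<one>)"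
    using x Hol_apply[OF s x] by (simp add: SymR_mult_apply)
  also have "\<dots> = hol_aut t (hol_aut s x \<otimes> s \<one>) \<otimes> t \<one>"
    using c by (intro Hol_apply[OF t]) simp
  also have "\<dots> = hol_aut t (hol_aut s x) \<otimes> hol_aut t (s \<one>) \<otimes> t \<one>"
    using c by (simp add: hol_aut_mult[OF t])
  finally have sx: "(s \<otimes>\<^bsub>SymR (carrier G)\<^esub> t) x = \<dots>" .
  have s1: "(s \<otimes>\<^bsub>SymR (carrier G)\<^esub> t) \<one> = hol_aut t (s \<one>) \<otimes> t \<one>"
    using Hol_apply[OF t c(2)] by (simp add: SymR_mult_apply)
  show ?thesis unfolding hol_aut_def[of "s \<otimes>\<^bsub>SymR (carrier G)\<^esub> t"] sx s1 using c
    by (simp add: m_assoc)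
qed

lemma commR_rho:
  assumes x: "x \<in> carrier G" and u: "u \<in> carrier G"
  shows "commR (SymR (carrier G)) (rho G x) (rho G u) = rho G (inv x \<otimes> inv u \<otimes> x \<otimes> u)"
  using x u by (simp add: commR_def rho_inv rho_mult rho_in_SymR)

lemma commR_rho_lam:
  assumes x: "x \<in> carrier G" and u: "u \<in> carrier G"
  shows "commR (SymR (carrier G)) (rho G x) (lam G u) = \<one>\<^bsub>SymR (carrier G)\<^esub>"
proof -
  have r: "rho G x \<in> carrier (SymR (carrier G))" and l: "lam G u \<in> carrier (SymR (carrier G))"
    using rho_in_SymR[OF x] lam_in_SymR[OF u] .
  have "commR (SymR (carrier G)) (rho G x) (lam G u)
      = inv\<^bsub>SymR (carrier G)\<^esub> rho G x \<otimes>\<^bsub>SymR (carrier G)\<^esub>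
        (inv\<^bsub>SymR (carrier G)\<^esub> lam G u \<otimes>\<^bsub>SymR (carrier G)\<^esub>
          (lam G u \<otimes>\<^bsub>SymR (carrier G)\<^esub> rho G x))"
    unfolding commR_def using r l by (simp add: SymR.m_assoc rho_lam_commute[OF x u])
  also have "\<dots> = inv\<^bsub>SymR (carrier G)\<^esub> rho G x \<otimes>\<^bsub>SymR (carrier G)\<^esub> rho G x"
    using r l by (simp add: SymR.m_assoc[symmetric])
  finally show ?thesis using r by simp
qed

text \<open>An endomorphism whose \<open>p\<close>-th iterate is the identity is an automorphism of order dividing \<open>p\<close>.\<close>

lemma hom_funpow_prime_fixes:
  assumes p: "Factorial_Ring.prime p" and ndvd: "\<not> p dvd card (auto G)"
    and f: "f \<in> hom G G" and period: "\<And>x. x \<in> carrier G \<Longrightarrow> (f ^^ p) x = x"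
    and x: "x \<in> carrier G"
  shows "f x = x"
proof -
  define r where "r = restrict f (carrier G)"
  interpret A: group "AutoGroup G" by (rule AutoGroup)
  have f_closed: "f y \<in> carrier G" if "y \<in> carrier G" for y using f that by (simp add: hom_in_carrier)
  have iter_closed: "(f ^^ k) y \<in> carrier G" if "y \<in> carrier G" for y k
    using that by (induction k) (simp_all add: f_closed)
  obtain q where p_Suc: "p = Suc q" using p prime_gt_0_nat not0_implies_Suc by blast
  have "(f ^^ q) (f y) = y" if "y \<in> carrier G" for y
    using period[OF that] unfolding p_Suc funpow_Suc_right o_apply .
  hence "(f ^^ q) (f y) = y" "f ((f ^^ q) y) = y" if "y \<in> carrier G" for y
    using that by (simp_all add: funpow_swap1)
  hence "bij_betw f (carrier G) (carrier G)"
    by (intro bij_betwI[where g = "f ^^ q"]) (auto simp: f_closed iter_closed)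
  hence r_auto: "r \<in> carrier (AutoGroup G)"
    using f by (simp add: r_def AutoGroup_def auto_def BijGroup_def Bij_def hom_restrict)
  have A_mult: "a \<otimes>\<^bsub>AutoGroup G\<^esub> b = compose (carrier G) a b"
    if "a \<in> carrier (AutoGroup G)" "b \<in> carrier (AutoGroup G)" for a b
    using that by (simp add: AutoGroup_def BijGroup_def auto_def)
  have A_one: "\<one>\<^bsub>AutoGroup G\<^esub> = (\<lambda>x\<in>carrier G. x)"
    by (simp add: AutoGroup_def BijGroup_def)
  have r_pow: "r [^]\<^bsub>AutoGroup G\<^esub> (k::nat) = restrict (f ^^ k) (carrier G)" for k
  proof (induction k)
    case 0 thus ?case by (simp add: A_one)
  next
    case (Suc k)
    have "r [^]\<^bsub>AutoGroup G\<^esub> Suc k = compose (carrier G) (r [^]\<^bsub>AutoGroup G\<^esub> k) r"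
      using A.nat_pow_closed[OF r_auto, of k] r_auto by (simp add: A_mult)
    also have "\<dots> = restrict (f ^^ Suc k) (carrier G)"
      unfolding Suc.IH unfolding compose_def r_def by (rule restrict_ext) (simp add: f_closed funpow_swap1)
    finally show ?case .
  qed
  have "r [^]\<^bsub>AutoGroup G\<^esub> p = \<one>\<^bsub>AutoGroup G\<^esub>"
    unfolding r_pow using period by (auto simp: AutoGroup_def BijGroup_def intro: restrict_ext)
  hence ord_dvd: "A.ord r dvd p" using A.pow_eq_id[OF r_auto] by simp
  have "order (AutoGroup G) = card (auto G)" by (simp add: AutoGroup_def order_def)
  hence "A.ord r \<noteq> p" using A.ord_dvd_group_order[OF r_auto] ndvd by metis
  hence "A.ord r = 1" using ord_dvd p by (metis prime_nat_iff)
  hence "r = \<one>\<^bsub>AutoGroup G\<^esub>" using A.ord_eq_1[OF r_auto] by simp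
  hence "r x = x" using x by (simp add: A_one)
  thus ?thesis using x by (simp add: r_def)
qed

end

lemma prime_cong_pow_eq_one:
  fixes e p :: nat
  assumes p: "Factorial_Ring.prime p" and e: "[e ^ p = 1] (mod p)"
  shows "[e = 1] (mod p)"
proof -
  have "\<not> p dvd e"
  proof
    assume "p dvd e"
    moreover have "e dvd e ^ p" using prime_gt_0_nat[OF p] by (simp add: dvd_power)
    ultimately have "p dvd e ^ p" by (rule dvd_trans)
    hence "[e ^ p = 0] (mod p)" by (simp add: cong_0_iff)
    hence "[1 = 0] (mod p)" using e cong_sym cong_trans by blast
    thus False using p by (simp add: cong_def prime_gt_1_nat)
  qed
  hence "[e * e ^ (p - 1) = e * 1] (mod p)" by (intro cong_scalar_left fermat_theorem[OF p])
  moreover have "e * e ^ (p - 1) = e ^ p" using p prime_gt_0_nat by (simp add: power_eq_if)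
  ultimately show ?thesis using e by (metis cong_sym cong_trans mult_1_right)
qed

locale prime_order_subgroup = group G for G (structure) +
  fixes P :: "'a set" and p :: nat
  assumes subgroup_P: "subgroup P G" and prime_p: "Factorial_Ring.prime p" and card_P: "card P = p"
begin

abbreviation "PG \<equiv> G\<lparr>carrier := P\<rparr>"

lemma p_gt_1: "p > 1"
  using prime_p prime_gt_1_nat by blast

lemma finite_P: "finite P"
  using card_P p_gt_1 card.infinite by fastforce

lemma P_carrier: "u \<in> P \<Longrightarrow> u \<in> carrier G"
  by (rule subgroup.mem_carrier[OF subgroup_P])

lemma group_PG: "group PG"
  by (rule subgroup.subgroup_is_group[OF subgroup_P is_group])

lemma P_pow_card_eq_one: "u \<in> P \<Longrightarrow> u [^] p = \<one>"
  using group.pow_order_eq_1[OF group_PG, of u] card_P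
  by (simp add: order_def nat_pow_consistent[symmetric])

lemma P_ord: assumes "w \<in> P" "w \<noteq> \<one>" shows "ord w = p"
proof -
  have "ord w dvd p" using pow_eq_id[OF P_carrier] P_pow_card_eq_one assms by simp
  moreover have "ord w \<noteq> 1" using ord_eq_1[OF P_carrier] assms by simp
  ultimately show ?thesis using prime_p by (metis prime_nat_iff)
qed

lemma P_nontrivial: "\<exists>w\<in>P. w \<noteq> \<one>"
proof (rule ccontr)
  assume "\<not> (\<exists>w\<in>P. w \<noteq> \<one>)"
  hence "card P \<le> 1" using card_mono[of "{\<one>}" P] by auto
  thus False using card_P p_gt_1 by simp
qed

lemma P_generated:
  assumes w: "w \<in> P" "w \<noteq> \<one>" and u: "u \<in> P"
  obtains k :: nat where "u = w [^] k"
proof -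
  have wc: "w \<in> carrier G" using w P_carrier by auto
  have "generate G {w} \<subseteq> P" using generate_subgroup_incl[OF _ subgroup_P] w by simp
  moreover have "card (generate G {w}) = card P" using generate_pow_card[OF wc] P_ord[OF w] card_P by simp
  ultimately have "generate G {w} = P" by (rule card_subset_eq[OF finite_P])
  moreover have "generate G {w} = {w [^] k | k. k \<in> (UNIV :: nat set)}"
    using generate_pow_nat[OF wc] P_ord[OF w] p_gt_1 by simp
  ultimately show ?thesis using u that by blast
qed

lemma P_commute: assumes u: "u \<in> P" and v: "v \<in> P" shows "u \<otimes> v = v \<otimes> u"
proof (cases "u = \<one>")
  case True thus ?thesis using P_carrier[OF v] by simp
next
  case False
  then obtain k :: nat where "v = u [^] k" using P_generated[OF u _ v] by blast
  thus ?thesis using nat_pow_comm[OF P_carrier[OF u], of 1 k] P_carrier[OF u] by simp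
qed
lemma comm_group_PG: "comm_group PG"
  by (rule group.group_comm_groupI[OF group_PG]) (simp add: P_commute)

lemma P_pow_eq_iff:
  assumes w: "w \<in> P" "w \<noteq> \<one>"
  shows "w [^] (a::nat) = w [^] (b::nat) \<longleftrightarrow> [a = b] (mod p)"
proof -
  have "w [^] a = w [^] b \<longleftrightarrow> w [^] (int a) = w [^] (int b)" by (simp add: int_pow_int)
  also have "\<dots> \<longleftrightarrow> int p dvd (int b - int a)" using int_pow_eq[OF P_carrier] P_ord w by simp
  also have "\<dots> \<longleftrightarrow> [a = b] (mod p)" by (metis cong_iff_dvd_diff cong_int_iff cong_sym_eq)
  finally show ?thesis .
qed

lemma P_pow_mod: assumes u: "u \<in> P" shows "u [^] (n::nat) = u [^] (n mod p)"
  using u P_pow_eq_iff[OF u] P_carrier by (cases "u = \<one>") (auto simp: cong_def)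

lemma P_endo_pow: "f \<in> hom PG PG \<Longrightarrow> u \<in> P \<Longrightarrow> f (u [^] (n::nat)) = f u [^] n"
  using hom_nat_pow[OF _ _ group_PG group_PG, of f u n] by (simp add: nat_pow_consistent[symmetric])

lemma P_endo_closed: "f \<in> hom PG PG \<Longrightarrow> u \<in> P \<Longrightarrow> f u \<in> P"
  using hom_in_carrier[of f PG PG u] by simp

text \<open>Every endomorphism of the cyclic group \<open>P\<close> is a power map.\<close>

lemma P_endo_commute:
  assumes f: "f \<in> hom PG PG" and g: "g \<in> hom PG PG" and u: "u \<in> P"
  shows "f (g u) = g (f u)"
proof -
  obtain w where w: "w \<in> P" "w \<noteq> \<one>" using P_nontrivial by blast
  have wc: "w \<in> carrier G" using w P_carrier by auto
  obtain i :: nat where i: "f w = w [^] i" using P_generated[OF w P_endo_closed[OF f w(1)]] by blast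
  obtain j :: nat where j: "g w = w [^] j" using P_generated[OF w P_endo_closed[OF g w(1)]] by blast
  obtain k :: nat where k: "u = w [^] k" using P_generated[OF w u] by blast
  have "f (g u) = w [^] (i * (j * k))"
    using k i j w wc by (simp add: P_endo_pow[OF f] P_endo_pow[OF g] nat_pow_pow)
  also have "\<dots> = w [^] (j * (i * k))" by (simp add: ac_simps)
  also have "\<dots> = g (f u)"
    using k i j w wc by (simp add: P_endo_pow[OF f] P_endo_pow[OF g] nat_pow_pow)
  finally show ?thesis .
qed

text \<open>Fermat: a power map \<open>w \<mapsto> w [^] e\<close> of period \<open>p\<close> has \<open>e\<^sup>p \<equiv> 1\<close>, hence \<open>e \<equiv> 1 (mod p)\<close>.\<close>

lemma P_endo_period_fixes:
  assumes f: "f \<in> hom PG PG" and period: "\<And>w. w \<in> P \<Longrightarrow> (f ^^ p) w = w" and u: "u \<in> P"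
  shows "f u = u"
proof -
  obtain w where w: "w \<in> P" "w \<noteq> \<one>" using P_nontrivial by blast
  have wc: "w \<in> carrier G" using w P_carrier by auto
  obtain e :: nat where e: "f w = w [^] e" using P_generated[OF w P_endo_closed[OF f w(1)]] by blast
  have iter: "(f ^^ k) w = w [^] (e ^ k)" for k
  proof (induction k)
    case 0 show ?case using wc by simp
  next
    case (Suc k)
    have "(f ^^ Suc k) w = f w [^] (e ^ k)" using Suc P_endo_pow[OF f w(1)] by simp
    thus ?case using e wc by (simp add: nat_pow_pow mult.commute)
  qed
  have "w [^] (e ^ p) = w [^] (1::nat)" using iter[of p] period[OF w(1)] wc by simp
  hence "[e = 1] (mod p)" using P_pow_eq_iff[OF w] prime_cong_pow_eq_one[OF prime_p] by blast
  hence fw: "f w = w" using e P_pow_eq_iff[OF w, of e 1] wc by simp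
  obtain k :: nat where "u = w [^] k" using P_generated[OF w u] by blast
  thus ?thesis using P_endo_pow[OF f w(1)] fw by simp
qed

lemma commute_P_generator:
  assumes w: "w \<in> P" "w \<noteq> \<one>" and x: "x \<in> carrier G" and wx: "w \<otimes> x = x \<otimes> w"
    and u: "u \<in> P"
  shows "u \<otimes> x = x \<otimes> u"
proof -
  have wc: "w \<in> carrier G" using w P_carrier by auto
  have "w [^] (k::nat) \<otimes> x = x \<otimes> w [^] k" for k
  proof (induction k)
    case (Suc k)
    have "w [^] Suc k \<otimes> x = w [^] k \<otimes> (w \<otimes> x)" using wc x by (simp add: m_assoc)
    also have "\<dots> = (w [^] k \<otimes> x) \<otimes> w" using wx wc x by (simp add: m_assoc)
    finally show ?case using Suc wc x by (simp add: m_assoc)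
  qed (simp add: x)
  moreover obtain k :: nat where "u = w [^] k" using P_generated[OF w u] by blast
  ultimately show ?thesis by simp
qed

end

locale regular_holomorph = group G for G (structure) +
  fixes N :: "('a \<Rightarrow> 'a) set"
  assumes N_Hol: "N \<subseteq> Hol G" and N_regular: "regular_subgroup (carrier G) N"
begin

abbreviation "S \<equiv> SymR (carrier G)"

lemma subgroup_N: "subgroup N S"
  using N_regular by (simp add: regular_subgroup_def)

lemma N_SymR: "s \<in> N \<Longrightarrow> s \<in> carrier S"
  by (rule subgroup.mem_carrier[OF subgroup_N])

lemma N_apply_closed: "s \<in> N \<Longrightarrow> x \<in> carrier G \<Longrightarrow> s x \<in> carrier G"
  by (rule SymR_apply_closed[OF N_SymR])

lemma N_eqI:
  assumes s: "s \<in> N" and t: "t \<in> N" and st: "s \<one> = t \<one>"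
  shows "s = t"
proof -
  have u: "s \<otimes>\<^bsub>S\<^esub> inv\<^bsub>S\<^esub> t \<in> N"
    using s t subgroup_N by (simp add: subgroup.m_closed subgroup.m_inv_closed)
  have "(s \<otimes>\<^bsub>S\<^esub> inv\<^bsub>S\<^esub> t) \<one> = \<one>"
    using st N_SymR[OF t] by (simp add: SymR_mult_apply SymR_inv_apply_left)
  hence "s \<otimes>\<^bsub>S\<^esub> inv\<^bsub>S\<^esub> t = \<one>\<^bsub>S\<^esub>"
    using N_regular u by (auto simp: regular_subgroup_def)
  thus ?thesis using N_SymR[OF s] N_SymR[OF t] by (metis SymR.inv_equality SymR.inv_inv SymR.inv_closed)
qed

lemma nu_in_N_apply_one: assumes g: "g \<in> carrier G" shows "nu G N g \<in> N \<and> nu G N g \<one> = g"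
proof -
  obtain s where "s \<in> N" "s \<one> = g"
    using N_regular g one_closed unfolding regular_subgroup_def by blast
  hence "\<exists>!s. s \<in> N \<and> s \<one> = g" using N_eqI by blast
  thus ?thesis unfolding nu_def by (rule theI')
qed

lemma nu_in_N: "g \<in> carrier G \<Longrightarrow> nu G N g \<in> N"
  using nu_in_N_apply_one by blast

lemma nu_apply_one [simp]: "g \<in> carrier G \<Longrightarrow> nu G N g \<one> = g"
  using nu_in_N_apply_one by blast

lemma nu_in_Hol: "g \<in> carrier G \<Longrightarrow> nu G N g \<in> Hol G"
  using nu_in_N N_Hol by blast

lemma nu_apply_one_eq: "s \<in> N \<Longrightarrow> nu G N (s \<one>) = s"
  by (rule N_eqI[OF nu_in_N]) (simp_all add: N_apply_closed)

lemma inj_on_nu: "inj_on (nu G N) (carrier G)"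
  by (metis inj_onI nu_apply_one)

lemma N_eq_image_nu: "N = nu G N ` carrier G"
proof
  show "N \<subseteq> nu G N ` carrier G"
    using nu_apply_one_eq N_apply_closed[OF _ one_closed] by (metis image_eqI subsetI)
qed (use nu_in_N in blast)

lemma hol_aut_pow:
  assumes s: "s \<in> N" and x: "x \<in> carrier G"
  shows "hol_aut (s [^]\<^bsub>S\<^esub> (n::nat)) x = (hol_aut s ^^ n) x"
proof (induction n)
  case 0 thus ?case using x by (simp add: hol_aut_def SymR_one)
next
  case (Suc n)
  have "s [^]\<^bsub>S\<^esub> n \<in> N"
    by (induction n) (simp_all add: s subgroup.one_closed[OF subgroup_N] subgroup.m_closed[OF subgroup_N])
  hence "hol_aut (s [^]\<^bsub>S\<^esub> n \<otimes>\<^bsub>S\<^esub> s) x = hol_aut s (hol_aut (s [^]\<^bsub>S\<^esub> n) x)"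
    using s x N_Hol by (intro hol_aut_mult_SymR) auto
  thus ?case using Suc by simp
qed

lemma N_eq_rhoI:
  "s \<in> N \<Longrightarrow> g \<in> carrier G \<Longrightarrow> (\<And>x. x \<in> carrier G \<Longrightarrow> s x = x \<otimes> g) \<Longrightarrow> s = rho G g"
  by (rule SymR_eqI[OF N_SymR rho_in_SymR]) simp_all

lemma N_eq_lamI:
  "s \<in> N \<Longrightarrow> g \<in> carrier G \<Longrightarrow> (\<And>x. x \<in> carrier G \<Longrightarrow> s x = g \<otimes> x) \<Longrightarrow> s = lam G g"
  by (rule SymR_eqI[OF N_SymR lam_in_SymR]) simp_all

end

locale sylow_holomorph = regular_holomorph G N for G (structure) and N +
  fixes p m :: nat and P M :: "'a set"
  assumes p_prime: "Factorial_Ring.prime p" and order_G: "order G = m * p"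
    and finite_G: "finite (carrier G)" and p_ndvd_m: "\<not> p dvd m"
    and sylow_P: "sylow_subgroup p P G" and sylow_unique: "\<And>Q. sylow_subgroup p Q G \<Longrightarrow> Q = P"
    and subgroup_M: "subgroup M G" and card_M: "card M = m"
    and p_ndvd_card_auto_M: "\<not> p dvd card (auto (G\<lparr>carrier := M\<rparr>))"
begin

lemma card_P_eq: "card P = p"
proof -
  obtain k where k: "card P = p ^ k" and ndvd: "\<not> p dvd (order G div card P)"
    using sylow_P by (auto simp: sylow_subgroup_def)
  have dvd: "card P dvd m * p"
    using lagrange[of P] sylow_P order_G by (metis dvd_triv_right sylow_subgroup_def)
  have "k = 1"
  proof (rule ccontr)
    assume "k \<noteq> 1"
    then consider "k = 0" | "k \<ge> 2" by linarith
    thus False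
    proof cases
      case 1 thus False using ndvd k order_G by simp
    next
      case 2
      hence "p * p dvd m * p" using k dvd le_imp_power_dvd[of 2 k p]
        by (simp add: power2_eq_square dvd_trans)
      thus False using p_ndvd_m p_prime prime_gt_1_nat by simp
    qed
  qed
  thus ?thesis using k by simp
qed

sublocale prime_order_subgroup G P p
  using sylow_P p_prime card_P_eq by (simp add: prime_order_subgroup_axioms_def sylow_subgroup_def
    prime_order_subgroup_def is_group)

text \<open>Being the unique Sylow \<open>p\<close>-subgroup, \<open>P\<close> is characteristic.\<close>

lemma P_invariant:
  assumes f: "f \<in> hom G G" and inj: "inj_on f (carrier G)"
  shows "f ` P = P"
proof (rule sylow_unique)
  interpret f: group_hom G G f by unfold_locales (rule f)
  have "card (f ` P) = p"
    using card_image[OF inj_on_subset[OF inj subgroup.subset[OF subgroup_P]]] card_P by simp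
  thus "sylow_subgroup p (f ` P) G"
    unfolding sylow_subgroup_def using f.subgroup_img_is_subgroup[OF subgroup_P] order_G p_ndvd_m p_gt_1
    by (auto intro: exI[of _ 1])
qed

lemma conjugate_P: "g \<in> carrier G \<Longrightarrow> u \<in> P \<Longrightarrow> conjugate g u \<in> P"
  using P_invariant[OF conjugate_hom conjugate_inj] by blast

lemma P_normal: "g \<in> carrier G \<Longrightarrow> u \<in> P \<Longrightarrow> inv g \<otimes> u \<otimes> g \<in> P"
  using conjugate_P by (simp add: conjugate_def)

lemma P_normal': "g \<in> carrier G \<Longrightarrow> u \<in> P \<Longrightarrow> g \<otimes> u \<otimes> inv g \<in> P"
  using P_normal[of "inv g" u] by simp

lemma hol_aut_P: "s \<in> Hol G \<Longrightarrow> hol_aut s ` P = P"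
  by (rule P_invariant[OF hol_aut_hom hol_aut_inj])

lemma hol_aut_in_P_iff:
  assumes s: "s \<in> Hol G" and x: "x \<in> carrier G"
  shows "hol_aut s x \<in> P \<longleftrightarrow> x \<in> P"
  using hol_aut_P[OF s] inj_onD[OF hol_aut_inj[OF s]] x P_carrier by (smt (verit) image_iff)

lemma hol_aut_hom_PG: "s \<in> Hol G \<Longrightarrow> hol_aut s \<in> hom PG PG"
  using hol_aut_in_P_iff P_carrier by (intro homI) (auto simp: hol_aut_mult)

lemma M_carrier: "u \<in> M \<Longrightarrow> u \<in> carrier G"
  by (rule subgroup.mem_carrier[OF subgroup_M])

lemma P_Int_M: "P \<inter> M = {\<one>}"
proof -
  have sub: "subgroup (P \<inter> M) G" by (rule subgroups_Inter_pair[OF subgroup_P subgroup_M])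
  have "card (P \<inter> M) dvd p" using card_subgroup_dvd[OF subgroup_P sub] card_P by simp
  moreover have "card (P \<inter> M) dvd m" using card_subgroup_dvd[OF subgroup_M sub] card_M by simp
  ultimately have "card (P \<inter> M) = 1" using p_prime p_ndvd_m by (metis prime_nat_iff)
  moreover have "\<one> \<in> P \<inter> M" using subgroup.one_closed[OF sub] by blast
  ultimately show ?thesis by (metis card_1_singletonE singletonD)
qed

lemma M_eq_if_quotient_P:
  assumes x: "x \<in> M" and y: "y \<in> M" and xy: "x \<otimes> inv y \<in> P"
  shows "x = y"
proof -
  have "x \<otimes> inv y \<in> M" using x y subgroup_M by (simp add: subgroup.m_closed subgroup.m_inv_closed)
  hence "x \<otimes> inv y = \<one>" using xy P_Int_M by blast
  thus "x = y" using x y M_carrier by (metis inv_equality inv_inv inv_closed)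
qed

lemma P_times_M: assumes x: "x \<in> carrier G" obtains u y where "u \<in> P" "y \<in> M" "x = u \<otimes> y"
proof -
  let ?f = "\<lambda>(u, y). u \<otimes> y"
  have "inj_on ?f (P \<times> M)"
  proof (rule inj_onI, clarify)
    fix u y u' y' assume u: "u \<in> P" "u' \<in> P" and y: "y \<in> M" "y' \<in> M" and e: "u \<otimes> y = u' \<otimes> y'"
    have c: "u \<in> carrier G" "u' \<in> carrier G" "y \<in> carrier G" "y' \<in> carrier G"
      using u y P_carrier M_carrier by auto
    have "inv u' \<otimes> u = inv u' \<otimes> (u \<otimes> y) \<otimes> inv y" using c by (simp add: m_assoc)
    also have "\<dots> = y' \<otimes> inv y" using c e by (simp add: m_assoc[symmetric])
    finally have "y' \<otimes> inv y \<in> P" using u subgroup_P by (metis subgroup.m_closed subgroup.m_inv_closed)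
    hence "y' = y" using M_eq_if_quotient_P y by blast
    thus "u = u' \<and> y = y'" using e c by simp
  qed
  hence "card (?f ` (P \<times> M)) = card (carrier G)"
    using card_P card_M order_G by (simp add: card_image card_cartesian_product order_def)
  moreover have "?f ` (P \<times> M) \<subseteq> carrier G" using P_carrier M_carrier by auto
  ultimately have "?f ` (P \<times> M) = carrier G" using card_subset_eq[OF finite_G] by metis
  thus ?thesis using x that by force
qed

text \<open>\<open>M_rep z\<close> is the element of \<open>M\<close> in the coset \<open>P z\<close>; it realises \<open>G / P \<cong> M\<close>.\<close>

definition M_rep :: "'a \<Rightarrow> 'a" where
  "M_rep z = (THE y. y \<in> M \<and> z \<otimes> inv y \<in> P)"

lemma M_rep_unique:
  assumes z: "z \<in> carrier G" and y: "y \<in> M" "z \<otimes> inv y \<in> P"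
  shows "M_rep z = y"
proof -
  have uniq: "y' = y" if "y' \<in> M" "z \<otimes> inv y' \<in> P" for y'
  proof (rule M_eq_if_quotient_P[OF that(1) y(1)])
    have "inv (z \<otimes> inv y') \<otimes> (z \<otimes> inv y) \<in> P"
      using y(2) that(2) subgroup_P by (simp add: subgroup.m_closed subgroup.m_inv_closed)
    thus "y' \<otimes> inv y \<in> P" using z y(1) that(1) M_carrier by (simp add: inv_mult_group m_assoc)
  qed
  show ?thesis unfolding M_rep_def using y uniq by (intro the_equality) blast+
qed

lemma M_rep: assumes z: "z \<in> carrier G" shows "M_rep z \<in> M \<and> z \<otimes> inv (M_rep z) \<in> P"
proof -
  obtain u y where u: "u \<in> P" and y: "y \<in> M" and e: "z = u \<otimes> y" using P_times_M[OF z] .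
  have "z \<otimes> inv y \<in> P" using e u y P_carrier M_carrier by (simp add: m_assoc)
  thus ?thesis using M_rep_unique[OF z y] y by simp
qed

lemma M_rep_in_M: "z \<in> carrier G \<Longrightarrow> M_rep z \<in> M"
  using M_rep by blast

lemma M_rep_quotient: "z \<in> carrier G \<Longrightarrow> z \<otimes> inv (M_rep z) \<in> P"
  using M_rep by blast

lemma M_rep_M: "x \<in> M \<Longrightarrow> M_rep x = x"
  using M_rep_unique[OF M_carrier] M_carrier subgroup.one_closed[OF subgroup_P] by simp

lemma nu_P_in_Hol: "g \<in> P \<Longrightarrow> nu G N g \<in> Hol G"
  by (rule nu_in_Hol[OF P_carrier])

lemma nu_mult_P:
  assumes g: "g \<in> P" and h: "h \<in> P"
  shows "nu G N g \<otimes>\<^bsub>S\<^esub> nu G N h = nu G N (hol_aut (nu G N h) g \<otimes> h)"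
proof -
  have gc: "g \<in> carrier G" and hc: "h \<in> carrier G" using g h P_carrier by auto
  have n: "nu G N g \<in> N" "nu G N h \<in> N" using nu_in_N gc hc by auto
  have "(nu G N g \<otimes>\<^bsub>S\<^esub> nu G N h) \<one> = nu G N h g" by (simp add: SymR_mult_apply gc)
  also have "\<dots> = hol_aut (nu G N h) g \<otimes> h" using Hol_apply[OF nu_P_in_Hol[OF h] gc] hc by simp
  finally show ?thesis using nu_apply_one_eq subgroup.m_closed[OF subgroup_N n] by metis
qed

lemma hol_aut_nu_mult_P: "g \<in> P \<Longrightarrow> h \<in> P \<Longrightarrow> hol_aut (nu G N h) g \<otimes> h \<in> P"
  using hol_aut_P[OF nu_P_in_Hol] subgroup.m_closed[OF subgroup_P] by blast

lemma nu_inv_P: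
  assumes g: "g \<in> P"
  shows "inv\<^bsub>S\<^esub> (nu G N g) \<in> nu G N ` P"
proof -
  have gc: "g \<in> carrier G" using g P_carrier by auto
  have n: "nu G N g \<in> N" using nu_in_N gc by auto
  have i: "inv\<^bsub>S\<^esub> (nu G N g) \<in> N" using n subgroup.m_inv_closed[OF subgroup_N] by blast
  define y where "y = (inv\<^bsub>S\<^esub> (nu G N g)) \<one>"
  have yc: "y \<in> carrier G" unfolding y_def using i N_apply_closed by simp
  have "nu G N g y = \<one>" unfolding y_def using SymR_inv_apply_right[OF N_SymR[OF n]] by simp
  hence "hol_aut (nu G N g) y \<otimes> g = \<one>" using Hol_apply[OF nu_P_in_Hol[OF g] yc] gc by simp
  hence "hol_aut (nu G N g) y = inv g"
    using gc hol_aut_closed[OF nu_P_in_Hol[OF g] yc] by (metis inv_equality inv_inv)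
  hence "y \<in> P"
    using g subgroup.m_inv_closed[OF subgroup_P] hol_aut_in_P_iff[OF nu_P_in_Hol[OF g] yc] by simp
  moreover have "nu G N y = inv\<^bsub>S\<^esub> (nu G N g)" unfolding y_def by (rule nu_apply_one_eq[OF i])
  ultimately show ?thesis by (metis imageI)
qed

lemma nu_P_subset_N: "nu G N ` P \<subseteq> N"
  using nu_in_N P_carrier by blast

lemma subgroup_nu_P: "subgroup (nu G N ` P) S"
proof (rule SymR.subgroupI)
  show "nu G N ` P \<subseteq> carrier S" using nu_P_subset_N N_SymR by blast
  show "nu G N ` P \<noteq> {}" using subgroup.one_closed[OF subgroup_P] by blast
  show "\<And>a. a \<in> nu G N ` P \<Longrightarrow> inv\<^bsub>S\<^esub> a \<in> nu G N ` P" using nu_inv_P by blast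
  show "\<And>a b. a \<in> nu G N ` P \<Longrightarrow> b \<in> nu G N ` P \<Longrightarrow> a \<otimes>\<^bsub>S\<^esub> b \<in> nu G N ` P"
    using nu_mult_P hol_aut_nu_mult_P by blast
qed

lemma card_nu_P: "card (nu G N ` P) = p"
  using card_image[OF inj_on_subset[OF inj_on_nu]] P_carrier card_P by (metis subsetI)

lemma card_N: "card N = m * p"
  using N_eq_image_nu card_image[OF inj_on_nu] order_G by (simp add: order_def)

lemma subgroup_nu_P_N: "subgroup (nu G N ` P) (S\<lparr>carrier := N\<rparr>)"
  by (rule SymR.subgroup_incl[OF subgroup_nu_P subgroup_N nu_P_subset_N])

lemma sylow_nu_P_N: "sylow_subgroup p (nu G N ` P) (S\<lparr>carrier := N\<rparr>)"
  unfolding sylow_subgroup_def using subgroup_nu_P_N card_nu_P card_N p_ndvd_m p_gt_1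
  by (auto simp: order_def intro: exI[of _ 1])

lemma nu_pow_p: assumes g: "g \<in> P" shows "nu G N g [^]\<^bsub>S\<^esub> p = \<one>\<^bsub>S\<^esub>"
proof -
  interpret nuP: group "S\<lparr>carrier := nu G N ` P\<rparr>"
    by (rule subgroup.subgroup_is_group[OF subgroup_nu_P SymR.is_group])
  show ?thesis
    using nuP.pow_order_eq_1 g card_nu_P by (simp add: order_def SymR.nat_pow_consistent[symmetric])
qed

lemma hol_aut_nu_funpow_p: "g \<in> P \<Longrightarrow> x \<in> carrier G \<Longrightarrow> (hol_aut (nu G N g) ^^ p) x = x"
  using hol_aut_pow[OF nu_in_N[OF P_carrier], of g x p] nu_pow_p by (simp add: hol_aut_def SymR_one)

lemma hol_aut_nu_fixes_P: "g \<in> P \<Longrightarrow> u \<in> P \<Longrightarrow> hol_aut (nu G N g) u = u"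
  using P_endo_period_fixes[OF hol_aut_hom_PG[OF nu_P_in_Hol]] hol_aut_nu_funpow_p P_carrier by blast

lemma M_rep_mult:
  assumes x: "x \<in> carrier G" and y: "y \<in> carrier G"
  shows "M_rep (x \<otimes> y) = M_rep x \<otimes> M_rep y"
proof (rule M_rep_unique)
  define a b where "a = M_rep x" and "b = M_rep y"
  have ab: "a \<in> carrier G" "b \<in> carrier G" using M_rep_in_M M_carrier x y unfolding a_def b_def by auto
  have "x \<otimes> y \<otimes> inv (a \<otimes> b) = (x \<otimes> inv a) \<otimes> (a \<otimes> (y \<otimes> inv b) \<otimes> inv a)"
    using x y ab by (simp add: m_assoc inv_mult_group)
  also have "\<dots> \<in> P"
    using M_rep_quotient x y P_normal'[OF ab(1)] subgroup.m_closed[OF subgroup_P] unfolding a_def b_def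
    by blast
  finally show "x \<otimes> y \<otimes> inv (M_rep x \<otimes> M_rep y) \<in> P" unfolding a_def b_def .
  show "M_rep x \<otimes> M_rep y \<in> M" using M_rep_in_M x y subgroup.m_closed[OF subgroup_M] by blast
qed (use x y in simp)

lemma M_rep_P: "u \<in> P \<Longrightarrow> M_rep u = \<one>"
  using M_rep_unique[OF P_carrier] subgroup.one_closed[OF subgroup_M] P_carrier by simp

text \<open>Since \<open>hol_aut s\<close> preserves \<open>P\<close>, it induces an automorphism of \<open>M \<cong> G / P\<close>.\<close>

definition M_aut :: "('a \<Rightarrow> 'a) \<Rightarrow> 'a \<Rightarrow> 'a" where
  "M_aut s x = M_rep (hol_aut s x)"

lemma M_rep_hol_aut_M_rep:
  assumes s: "s \<in> Hol G" and z: "z \<in> carrier G"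
  shows "M_rep (hol_aut s (M_rep z)) = M_rep (hol_aut s z)"
proof -
  define u where "u = z \<otimes> inv (M_rep z)"
  have u: "u \<in> P" unfolding u_def using M_rep_quotient[OF z] .
  have r: "M_rep z \<in> carrier G" using M_rep_in_M[OF z] M_carrier by auto
  have "z = u \<otimes> M_rep z" unfolding u_def using z r by (simp add: m_assoc)
  hence "M_rep (hol_aut s z) = M_rep (hol_aut s u) \<otimes> M_rep (hol_aut s (M_rep z))"
    using hol_aut_mult[OF s _ r] M_rep_mult hol_aut_closed[OF s] P_carrier u r by metis
  also have "M_rep (hol_aut s u) = \<one>"
    using M_rep_P hol_aut_in_P_iff[OF s] P_carrier u by blast
  finally show ?thesis using M_rep_in_M M_carrier hol_aut_closed[OF s r] by simp
qed

lemma M_aut_hom: assumes s: "s \<in> Hol G" shows "M_aut s \<in> hom (G\<lparr>carrier := M\<rparr>) (G\<lparr>carrier := M\<rparr>)"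
  using M_rep_in_M hol_aut_closed[OF s] M_carrier M_rep_mult hol_aut_mult[OF s]
    subgroup.m_closed[OF subgroup_M]
  by (intro homI) (auto simp: M_aut_def)

lemma M_aut_funpow:
  assumes s: "s \<in> Hol G" and x: "x \<in> M"
  shows "(M_aut s ^^ k) x = M_rep ((hol_aut s ^^ k) x)"
proof (induction k)
  case 0 thus ?case using M_rep_M[OF x] by simp
next
  case (Suc k)
  have "(hol_aut s ^^ k) x \<in> carrier G"
    using x M_carrier by (induction k) (simp_all add: hol_aut_closed[OF s])
  thus ?case using Suc M_rep_hol_aut_M_rep[OF s] by (simp add: M_aut_def)
qed

lemma M_aut_nu: assumes g: "g \<in> P" and x: "x \<in> M" shows "M_aut (nu G N g) x = x"
proof (rule group.hom_funpow_prime_fixes[OF _ p_prime _ M_aut_hom[OF nu_P_in_Hol[OF g]]])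
  show "group (G\<lparr>carrier := M\<rparr>)" by (rule subgroup.subgroup_is_group[OF subgroup_M is_group])
  show "\<not> p dvd card (auto (G\<lparr>carrier := M\<rparr>))" by (rule p_ndvd_card_auto_M)
  show "(M_aut (nu G N g) ^^ p) y = y" if "y \<in> carrier (G\<lparr>carrier := M\<rparr>)" for y
    using that M_aut_funpow[OF nu_P_in_Hol[OF g]] hol_aut_nu_funpow_p[OF g] M_carrier M_rep_M by simp
qed (use x in simp)

lemma hol_aut_nu_M: "g \<in> P \<Longrightarrow> x \<in> M \<Longrightarrow> hol_aut (nu G N g) x \<otimes> inv x \<in> P"
  using M_rep_quotient[OF hol_aut_closed[OF nu_P_in_Hol M_carrier]] M_aut_nu by (simp add: M_aut_def)

lemma conjugate_finprod:
  assumes x: "x \<in> carrier G"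
  shows "finite A \<Longrightarrow> f \<in> A \<rightarrow> P \<Longrightarrow>
    finprod PG (\<lambda>y. conjugate x (f y)) A = conjugate x (finprod PG f A)"
proof (induction A rule: finite_induct)
  case empty
  interpret PG: comm_group PG by (rule comm_group_PG)
  show ?case using x by (simp add: conjugate_def)
next
  case (insert a F)
  interpret PG: comm_group PG by (rule comm_group_PG)
  have fa: "f a \<in> P" and fF: "f \<in> F \<rightarrow> P" using insert.prems by auto
  have prod_F: "finprod PG f F \<in> P" using PG.finprod_closed[of f F] fF by simp
  have cF: "(\<lambda>y. conjugate x (f y)) \<in> F \<rightarrow> P" using fF conjugate_P[OF x] by auto
  have "finprod PG (\<lambda>y. conjugate x (f y)) (insert a F)
      = conjugate x (f a) \<otimes> finprod PG (\<lambda>y. conjugate x (f y)) F"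
    using PG.finprod_insert[of F a "\<lambda>y. conjugate x (f y)"] insert.hyps cF conjugate_P[OF x] fa
    by simp
  also have "\<dots> = conjugate x (f a \<otimes> finprod PG f F)"
    using insert.IH fF hom_mult[OF conjugate_hom[OF x]] fa prod_F P_carrier by simp
  also have "f a \<otimes> finprod PG f F = finprod PG f (insert a F)"
    using PG.finprod_insert[of F a f] insert.hyps fF fa by simp
  finally show ?case .
qed

text \<open>Averaging over \<open>M\<close>: since \<open>gcd(|M|, |P|) = 1\<close>, every crossed homomorphism \<open>M \<rightarrow> P\<close> is principal.\<close>

lemma crossed_hom_average:
  assumes \<delta>: "\<And>x. x \<in> M \<Longrightarrow> \<delta> x \<in> P"
    and crossed: "\<And>x y. x \<in> M \<Longrightarrow> y \<in> M \<Longrightarrow> \<delta> (y \<otimes> x) = conjugate x (\<delta> y) \<otimes> \<delta> x"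
    and x: "x \<in> M"
  shows "finprod PG \<delta> M = conjugate x (finprod PG \<delta> M) \<otimes> \<delta> x [^] m"
proof -
  interpret PG: comm_group PG by (rule comm_group_PG)
  have \<delta>_fun: "\<delta> \<in> M \<rightarrow> P" using \<delta> by auto
  have finite_M: "finite M" using finite_G subgroup.subset[OF subgroup_M] by (rule rev_finite_subset)
  have xc: "x \<in> carrier G" using x M_carrier by auto
  have "bij_betw (\<lambda>y. y \<otimes> x) M M"
    using subgroup.m_closed[OF subgroup_M] subgroup.m_inv_closed[OF subgroup_M] x xc M_carrier
    by (intro bij_betwI[where g = "\<lambda>y. y \<otimes> inv x"]) (auto simp: m_assoc)
  hence "finprod PG \<delta> M = finprod PG (\<lambda>y. \<delta> (y \<otimes> x)) M"
    using PG.finprod_reindex[of \<delta> "\<lambda>y. y \<otimes> x" M] \<delta>_fun by (simp add: bij_betw_def)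
  also have "\<dots> = finprod PG (\<lambda>y. conjugate x (\<delta> y) \<otimes>\<^bsub>PG\<^esub> \<delta> x) M"
    using crossed x by (intro PG.finprod_cong') (auto intro: subgroup.m_closed[OF subgroup_P]
        simp: \<delta> conjugate_P[OF xc])
  also have "\<dots> = finprod PG (\<lambda>y. conjugate x (\<delta> y)) M \<otimes> finprod PG (\<lambda>y. \<delta> x) M"
    using \<delta> conjugate_P[OF xc] x by (subst PG.finprod_multf) auto
  also have "\<dots> = conjugate x (finprod PG \<delta> M) \<otimes> \<delta> x [^] m"
    using conjugate_finprod[OF xc finite_M \<delta>_fun] PG.finprod_const[of "\<delta> x" M] \<delta>[OF x] card_M
    by (simp add: nat_pow_consistent[symmetric])
  finally show ?thesis .
qed

lemma crossed_hom_principal: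
  assumes \<delta>: "\<And>x. x \<in> M \<Longrightarrow> \<delta> x \<in> P"
    and crossed: "\<And>x y. x \<in> M \<Longrightarrow> y \<in> M \<Longrightarrow> \<delta> (y \<otimes> x) = conjugate x (\<delta> y) \<otimes> \<delta> x"
  obtains c where "c \<in> P" "\<And>x. x \<in> M \<Longrightarrow> \<delta> x = conjugate x c \<otimes> inv c"
proof -
  interpret PG: comm_group PG by (rule comm_group_PG)
  define d where "d = finprod PG \<delta> M"
  have d: "d \<in> P" unfolding d_def using PG.finprod_closed[of \<delta> M] \<delta> by auto
  have "coprime m p" using prime_imp_coprime[OF p_prime p_ndvd_m] by (simp add: coprime_commute)
  then obtain k :: nat where k: "[m * k = 1] (mod p)" using cong_solve_coprime_nat by auto
  define c where "c = inv d [^] k"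
  have "inv d \<in> P" using d subgroup_P by (simp add: subgroup.m_inv_closed)
  hence c: "c \<in> P" unfolding c_def
    using PG.nat_pow_closed[of "inv d" k] by (simp add: nat_pow_consistent[symmetric])
  moreover have "\<delta> x = conjugate x c \<otimes> inv c" if x: "x \<in> M" for x
  proof -
    have xc: "x \<in> carrier G" using x M_carrier by auto
    have cd: "conjugate x d \<in> P" using conjugate_P[OF xc d] .
    have dc: "d \<in> carrier G" "conjugate x d \<in> carrier G" "\<delta> x \<in> carrier G"
      using d cd \<delta>[OF x] P_carrier by auto
    have quotient: "\<delta> x [^] m = inv (conjugate x d) \<otimes> d"
      using inv_solve_left[of "\<delta> x [^] m" "conjugate x d" d] crossed_hom_average[OF \<delta> crossed x] dc
      unfolding d_def by simp
    have "\<delta> x = \<delta> x [^] (m * k)"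
      using P_pow_mod[OF \<delta>[OF x], of "m * k"] P_pow_mod[OF \<delta>[OF x], of 1] k dc
      by (simp add: cong_def)
    also have "\<dots> = (inv (conjugate x d) \<otimes> d) [^] k"
      using dc quotient by (simp add: nat_pow_pow[symmetric])
    also have "\<dots> = inv (conjugate x d) [^] k \<otimes> d [^] k"
      using P_commute[of "inv (conjugate x d)" d] cd d subgroup_P dc
      by (intro pow_mult_distrib) (auto simp: subgroup.m_inv_closed)
    also have "inv (conjugate x d) [^] k = conjugate x c"
      unfolding c_def using hom_nat_pow[OF conjugate_hom[OF xc], of "inv d" k] dc xc
      by (simp add: conjugate_def inv_mult_group m_assoc)
    also have "d [^] k = inv c" unfolding c_def using dc by (simp add: nat_pow_inv)
    finally show ?thesis .
  qed
  ultimately show ?thesis by (rule that)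
qed

lemma hol_aut_nu_conjugation:
  assumes g: "g \<in> P"
  obtains c where "c \<in> P" "\<And>x. x \<in> carrier G \<Longrightarrow> hol_aut (nu G N g) x = c \<otimes> x \<otimes> inv c"
proof -
  let ?a = "hol_aut (nu G N g)"
  have s: "nu G N g \<in> Hol G" by (rule nu_P_in_Hol[OF g])
  have a_closed: "?a x \<in> carrier G" if "x \<in> carrier G" for x using hol_aut_closed[OF s that] .
  define \<delta> where "\<delta> x = inv x \<otimes> ?a x" for x
  have \<delta>_P: "\<delta> x \<in> P" if x: "x \<in> M" for x
  proof -
    have xc: "x \<in> carrier G" using x M_carrier by auto
    have "inv x \<otimes> (?a x \<otimes> inv x) \<otimes> x \<in> P" using P_normal[OF xc hol_aut_nu_M[OF g x]] .
    thus ?thesis unfolding \<delta>_def using xc a_closed[OF xc] by (simp add: m_assoc)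
  qed
  have \<delta>_crossed: "\<delta> (y \<otimes> x) = conjugate x (\<delta> y) \<otimes> \<delta> x" if "x \<in> M" "y \<in> M" for x y
    using that M_carrier hol_aut_mult[OF s] a_closed
    by (simp add: \<delta>_def conjugate_def m_assoc inv_mult_group)
  obtain c where c: "c \<in> P" and \<delta>c: "\<And>x. x \<in> M \<Longrightarrow> \<delta> x = conjugate x c \<otimes> inv c"
    using crossed_hom_principal[of \<delta>, OF \<delta>_P \<delta>_crossed] by blast
  have cc: "c \<in> carrier G" using c P_carrier by auto
  have on_M: "?a y = c \<otimes> y \<otimes> inv c" if y: "y \<in> M" for y
  proof -
    have yc: "y \<in> carrier G" using y M_carrier by auto
    have "?a y = y \<otimes> \<delta> y" unfolding \<delta>_def using yc a_closed[OF yc] by simp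
    thus ?thesis using \<delta>c[OF y] yc cc by (simp add: conjugate_def m_assoc)
  qed
  have "?a x = c \<otimes> x \<otimes> inv c" if x: "x \<in> carrier G" for x
  proof -
    obtain u y where u: "u \<in> P" and y: "y \<in> M" and e: "x = u \<otimes> y" using P_times_M[OF x] .
    have uc: "u \<in> carrier G" and yc: "y \<in> carrier G" using u y P_carrier M_carrier by auto
    have "?a x = u \<otimes> (c \<otimes> y \<otimes> inv c)"
      using e hol_aut_mult[OF s uc yc] hol_aut_nu_fixes_P[OF g u] on_M[OF y] by simp
    also have "\<dots> = (u \<otimes> c) \<otimes> y \<otimes> inv c" using uc yc cc by (simp add: m_assoc)
    also have "\<dots> = c \<otimes> x \<otimes> inv c" using P_commute[OF u c] e uc yc cc by (simp add: m_assoc)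
    finally show ?thesis .
  qed
  thus ?thesis using c that by blast
qed

lemma nu_P_form:
  assumes g: "g \<in> P"
  obtains c where "c \<in> P" "\<And>x. x \<in> carrier G \<Longrightarrow> nu G N g x = c \<otimes> x \<otimes> (inv c \<otimes> g)"
proof -
  obtain c where c: "c \<in> P" and h: "\<And>x. x \<in> carrier G \<Longrightarrow> hol_aut (nu G N g) x = c \<otimes> x \<otimes> inv c"
    using hol_aut_nu_conjugation[OF g] by blast
  have "nu G N g x = c \<otimes> x \<otimes> (inv c \<otimes> g)" if x: "x \<in> carrier G" for x
    using Hol_apply[OF nu_P_in_Hol[OF g] x] h[OF x] x c g P_carrier by (simp add: m_assoc)
  thus ?thesis using c that by blast
qed

lemma nu_P_eq_rho_if_central:
  assumes central: "\<forall>u\<in>P. \<forall>x\<in>carrier G. u \<otimes> x = x \<otimes> u"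
  shows "nu G N ` P = rho G ` P"
proof (rule image_cong[OF refl])
  fix g assume g: "g \<in> P"
  obtain c where c: "c \<in> P" and h: "\<And>x. x \<in> carrier G \<Longrightarrow> nu G N g x = c \<otimes> x \<otimes> (inv c \<otimes> g)"
    using nu_P_form[OF g] by blast
  have "nu G N g x = x \<otimes> g" if x: "x \<in> carrier G" for x
  proof -
    have "c \<otimes> x = x \<otimes> c" using central c x by blast
    hence "nu G N g x = (x \<otimes> c) \<otimes> (inv c \<otimes> g)" using h[OF x] by simp
    thus ?thesis using x c g P_carrier by (simp add: m_assoc)
  qed
  thus "nu G N g = rho G g" using N_eq_rhoI nu_in_N P_carrier g by blast
qed

text \<open>By \<open>nu_P_form\<close>, \<open>\<nu>(g) = \<lambda>(c) \<rho>(e)\<close> with \<open>c, e \<in> P\<close>, i.e. \<open>x \<mapsto> c \<otimes> x \<otimes> e\<close>.\<close>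

definition nu_factors :: "'a \<Rightarrow> 'a \<Rightarrow> 'a \<Rightarrow> bool" where
  "nu_factors g c e \<longleftrightarrow> c \<in> P \<and> e \<in> P \<and> (\<forall>x\<in>carrier G. nu G N g x = c \<otimes> x \<otimes> e)"

definition nu_left :: "'a \<Rightarrow> 'a" where
  "nu_left g = (SOME c. \<exists>e. nu_factors g c e)"

definition nu_right :: "'a \<Rightarrow> 'a" where
  "nu_right g = (SOME e. nu_factors g (nu_left g) e)"

lemma nu_factors_left_right: assumes g: "g \<in> P" shows "nu_factors g (nu_left g) (nu_right g)"
proof -
  obtain c where c: "c \<in> P" and h: "\<And>x. x \<in> carrier G \<Longrightarrow> nu G N g x = c \<otimes> x \<otimes> (inv c \<otimes> g)"
    using nu_P_form[OF g] by blast
  have "inv c \<otimes> g \<in> P" using c g subgroup_P by (simp add: subgroup.m_closed subgroup.m_inv_closed)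
  hence "\<exists>c e. nu_factors g c e" using c h unfolding nu_factors_def by blast
  hence "\<exists>e. nu_factors g (nu_left g) e" unfolding nu_left_def by (rule someI_ex)
  thus ?thesis unfolding nu_right_def by (rule someI_ex)
qed

lemma nu_left_P: "g \<in> P \<Longrightarrow> nu_left g \<in> P"
  using nu_factors_left_right unfolding nu_factors_def by blast

lemma nu_right_P: "g \<in> P \<Longrightarrow> nu_right g \<in> P"
  using nu_factors_left_right unfolding nu_factors_def by blast

lemma nu_apply_left_right: "g \<in> P \<Longrightarrow> x \<in> carrier G \<Longrightarrow> nu G N g x = nu_left g \<otimes> x \<otimes> nu_right g"
  using nu_factors_left_right unfolding nu_factors_def by blast

lemma nu_left_mult_right: assumes g: "g \<in> P" shows "nu_left g \<otimes> nu_right g = g"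
  using nu_apply_left_right[OF g one_closed] nu_left_P[OF g] P_carrier g by simp

context
  assumes not_central: "\<not> (\<forall>u\<in>P. \<forall>x\<in>carrier G. u \<otimes> x = x \<otimes> u)"
begin

lemma two_sided_translation_unique:
  assumes c: "c \<in> P" "c' \<in> P" and e: "e \<in> P" "e' \<in> P"
    and eq: "\<And>x. x \<in> carrier G \<Longrightarrow> c \<otimes> x \<otimes> e = c' \<otimes> x \<otimes> e'"
  shows "c = c' \<and> e = e'"
proof -
  have cc: "c \<in> carrier G" "e \<in> carrier G" "c' \<in> carrier G" "e' \<in> carrier G"
    using c e P_carrier by auto
  have ce: "c \<otimes> e = c' \<otimes> e'" using eq[OF one_closed] cc by simp
  define w where "w = inv c' \<otimes> c"
  have w: "w \<in> P" unfolding w_def using c subgroup_P by (simp add: subgroup.m_closed subgroup.m_inv_closed)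
  have wc: "w \<in> carrier G" using w P_carrier by auto
  have we: "w \<otimes> e = e'" unfolding w_def using ce cc by (simp add: m_assoc)
  have commutes: "w \<otimes> x = x \<otimes> w" if x: "x \<in> carrier G" for x
  proof -
    have "w \<otimes> x \<otimes> e = x \<otimes> e'" unfolding w_def using eq x cc by (simp add: m_assoc)
    also have "\<dots> = x \<otimes> w \<otimes> e" using we x cc wc by (simp add: m_assoc)
    finally show ?thesis using x cc wc by simp
  qed
  have "w = \<one>"
  proof (rule ccontr)
    assume "w \<noteq> \<one>"
    hence "\<forall>u\<in>P. \<forall>x\<in>carrier G. u \<otimes> x = x \<otimes> u" using commute_P_generator[OF w] commutes by blast
    thus False using not_central by contradiction
  qed
  hence "c = c'" unfolding w_def using inv_solve_left[of \<one> c' c] cc by simp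
  thus ?thesis using ce cc by simp
qed

lemma nu_factors_unique: "g \<in> P \<Longrightarrow> nu_factors g c e \<Longrightarrow> c = nu_left g \<and> e = nu_right g"
  using two_sided_translation_unique nu_left_P nu_right_P nu_apply_left_right
  unfolding nu_factors_def by metis

lemma N_two_sided:
  assumes s: "s \<in> N" and c: "c \<in> P" and e: "e \<in> P"
    and h: "\<And>x. x \<in> carrier G \<Longrightarrow> s x = c \<otimes> x \<otimes> e"
  shows "s = nu G N (c \<otimes> e)" "nu_left (c \<otimes> e) = c" "nu_right (c \<otimes> e) = e"
proof -
  have ce: "c \<otimes> e \<in> P" using c e subgroup.m_closed[OF subgroup_P] by blast
  have "s \<one> = c \<otimes> e" using h c P_carrier by simp
  thus s_eq: "s = nu G N (c \<otimes> e)" using nu_apply_one_eq[OF s] by simp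
  have "nu_factors (c \<otimes> e) c e" unfolding nu_factors_def using c e h s_eq by simp
  thus "nu_left (c \<otimes> e) = c" "nu_right (c \<otimes> e) = e" using nu_factors_unique[OF ce] by simp_all
qed

lemma nu_left_right_mult:
  assumes a: "a \<in> P" and b: "b \<in> P"
  shows "nu_left (a \<otimes> b) = nu_left a \<otimes> nu_left b \<and> nu_right (a \<otimes> b) = nu_right a \<otimes> nu_right b"
proof -
  have cP: "nu_left a \<in> P" "nu_left b \<in> P" "nu_right a \<in> P" "nu_right b \<in> P"
    using nu_left_P nu_right_P a b by auto
  have cc: "nu_left a \<in> carrier G" "nu_left b \<in> carrier G" "nu_right a \<in> carrier G" "nu_right b \<in> carrier G"
    using cP P_carrier by auto
  have n: "nu G N a \<otimes>\<^bsub>S\<^esub> nu G N b \<in> N"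
    using subgroup.m_closed[OF subgroup_N nu_in_N nu_in_N] a b P_carrier by blast
  have "(nu G N a \<otimes>\<^bsub>S\<^esub> nu G N b) x = (nu_left b \<otimes> nu_left a) \<otimes> x \<otimes> (nu_right a \<otimes> nu_right b)"
    if x: "x \<in> carrier G" for x
    using x a b cc by (simp add: SymR_mult_apply nu_apply_left_right m_assoc)
  from N_two_sided[OF n _ _ this]
  have "nu_left ((nu_left b \<otimes> nu_left a) \<otimes> (nu_right a \<otimes> nu_right b)) = nu_left b \<otimes> nu_left a"
    "nu_right ((nu_left b \<otimes> nu_left a) \<otimes> (nu_right a \<otimes> nu_right b)) = nu_right a \<otimes> nu_right b"
    using cP subgroup.m_closed[OF subgroup_P] by auto
  moreover have "(nu_left b \<otimes> nu_left a) \<otimes> (nu_right a \<otimes> nu_right b) = a \<otimes> b"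
  proof -
    have "(nu_left b \<otimes> nu_left a) \<otimes> (nu_right a \<otimes> nu_right b)
        = nu_left b \<otimes> ((nu_left a \<otimes> nu_right a) \<otimes> nu_right b)"
      using cc by (simp add: m_assoc)
    also have "\<dots> = nu_left b \<otimes> (a \<otimes> nu_right b)" using nu_left_mult_right[OF a] by simp
    also have "\<dots> = (nu_left b \<otimes> nu_right b) \<otimes> a"
      using cc a P_carrier P_commute[OF a cP(4)] by (simp add: m_assoc)
    finally show ?thesis using nu_left_mult_right[OF b] P_commute[OF b a] by simp
  qed
  ultimately show ?thesis using P_commute[OF cP(2,1)] by simp
qed

lemma nu_left_hom: "nu_left \<in> hom PG PG"
  using nu_left_P nu_left_right_mult by (intro homI) simp_all

lemma nu_right_hom: "nu_right \<in> hom PG PG"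
  using nu_right_P nu_left_right_mult by (intro homI) simp_all

lemma nu_P_eq_rho_if_left_kernel:
  assumes g: "g \<in> P" "g \<noteq> \<one>" and left: "nu_left g = \<one>"
  shows "nu G N ` P = rho G ` P"
proof (rule image_cong[OF refl])
  fix u assume u: "u \<in> P"
  obtain k :: nat where "u = g [^] k" using P_generated[OF g u] by blast
  hence "nu_left u = \<one>" using P_endo_pow[OF nu_left_hom g(1)] left by simp
  hence "nu G N u x = x \<otimes> u" if "x \<in> carrier G" for x
    using nu_apply_left_right[OF u that] nu_left_mult_right[OF u] nu_right_P[OF u] P_carrier that by simp
  thus "nu G N u = rho G u" using N_eq_rhoI nu_in_N P_carrier u by blast
qed

lemma nu_P_eq_lam_if_right_kernel:
  assumes g: "g \<in> P" "g \<noteq> \<one>" and right: "nu_right g = \<one>"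
  shows "nu G N ` P = lam G ` P"
proof (rule image_cong[OF refl])
  fix u assume u: "u \<in> P"
  obtain k :: nat where "u = g [^] k" using P_generated[OF g u] by blast
  hence "nu_right u = \<one>" using P_endo_pow[OF nu_right_hom g(1)] right by simp
  hence "nu G N u x = u \<otimes> x" if "x \<in> carrier G" for x
    using nu_apply_left_right[OF u that] nu_left_mult_right[OF u] nu_left_P[OF u] P_carrier that by simp
  thus "nu G N u = lam G u" using N_eq_lamI nu_in_N P_carrier u by blast
qed

lemma nu_conjugate_by_nu:
  assumes h: "h \<in> carrier G" and w: "w \<in> P"
  defines "\<beta> \<equiv> hol_aut (nu G N h)"
  defines "w' \<equiv> \<beta> (nu_left w) \<otimes> conjugate h (\<beta> (nu_right w))"
  shows "inv\<^bsub>S\<^esub> (nu G N h) \<otimes>\<^bsub>S\<^esub> nu G N w \<otimes>\<^bsub>S\<^esub> nu G N h = nu G N w'"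
    and "nu_left w' = \<beta> (nu_left w)" and "nu_right w' = conjugate h (\<beta> (nu_right w))"
proof -
  let ?t = "nu G N h"
  have t: "?t \<in> N" "?t \<in> Hol G" using nu_in_N[OF h] nu_in_Hol[OF h] by auto
  have lr: "nu_left w \<in> carrier G" "nu_right w \<in> carrier G" using nu_left_P nu_right_P w P_carrier by auto
  have \<beta>_P: "\<beta> (nu_left w) \<in> P" "conjugate h (\<beta> (nu_right w)) \<in> P"
    unfolding \<beta>_def using hol_aut_in_P_iff[OF t(2)] nu_left_P nu_right_P w lr conjugate_P[OF h] by auto
  have s: "inv\<^bsub>S\<^esub> ?t \<otimes>\<^bsub>S\<^esub> nu G N w \<otimes>\<^bsub>S\<^esub> ?t \<in> N"
    using t nu_in_N[OF P_carrier[OF w]] subgroup_N by (simp add: subgroup.m_closed subgroup.m_inv_closed)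
  have "(inv\<^bsub>S\<^esub> ?t \<otimes>\<^bsub>S\<^esub> nu G N w \<otimes>\<^bsub>S\<^esub> ?t) x = \<beta> (nu_left w) \<otimes> x \<otimes> conjugate h (\<beta> (nu_right w))"
    if x: "x \<in> carrier G" for x
  proof -
    define y where "y = (inv\<^bsub>S\<^esub> ?t) x"
    have y: "y \<in> carrier G" unfolding y_def using SymR_inv_apply_closed[OF N_SymR[OF t(1)] x] .
    have \<beta>y: "\<beta> y = x \<otimes> inv h"
      using Hol_apply[OF t(2) y] SymR_inv_apply_right[OF N_SymR[OF t(1)] x] hol_aut_closed[OF t(2) y] h
      unfolding \<beta>_def y_def[symmetric] by (simp add: m_assoc)
    have "(inv\<^bsub>S\<^esub> ?t \<otimes>\<^bsub>S\<^esub> nu G N w \<otimes>\<^bsub>S\<^esub> ?t) x = ?t (nu_left w \<otimes> y \<otimes> nu_right w)"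
      using x y w by (simp add: SymR_mult_apply y_def nu_apply_left_right)
    also have "\<dots> = \<beta> (nu_left w) \<otimes> \<beta> y \<otimes> \<beta> (nu_right w) \<otimes> h"
      using Hol_apply[OF t(2)] hol_aut_mult[OF t(2)] lr y h unfolding \<beta>_def by simp
    also have "\<dots> = \<beta> (nu_left w) \<otimes> x \<otimes> conjugate h (\<beta> (nu_right w))"
      unfolding \<beta>y conjugate_def using hol_aut_closed[OF t(2)] lr h x unfolding \<beta>_def
      by (simp add: m_assoc)
    finally show ?thesis .
  qed
  from N_two_sided[OF s \<beta>_P this]
  show "inv\<^bsub>S\<^esub> ?t \<otimes>\<^bsub>S\<^esub> nu G N w \<otimes>\<^bsub>S\<^esub> ?t = nu G N w'" "nu_left w' = \<beta> (nu_left w)"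
    "nu_right w' = conjugate h (\<beta> (nu_right w))" unfolding w'_def by simp_all
qed

text \<open>If neither factor map had a kernel, \<open>\<nu>(P)\<close> would force every \<open>h\<close> to centralise \<open>P\<close>.\<close>

lemma nu_left_or_right_kernel: "\<exists>g\<in>P. g \<noteq> \<one> \<and> (nu_left g = \<one> \<or> nu_right g = \<one>)"
proof (rule ccontr)
  assume no_kernel: "\<not> ?thesis"
  obtain h u where h: "h \<in> carrier G" and u: "u \<in> P" and hu: "u \<otimes> h \<noteq> h \<otimes> u"
    using not_central by blast
  obtain w where w: "w \<in> P" "w \<noteq> \<one>" using P_nontrivial by blast
  interpret left: group_hom PG PG nu_left
    by (simp add: group_hom_def group_hom_axioms_def group_PG nu_left_hom)
  have "kernel PG PG nu_left = {\<one>}"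
    using no_kernel left.hom_one subgroup.one_closed[OF subgroup_P] by (auto simp: kernel_def)
  hence left_inj: "inj_on nu_left P" using left.trivial_ker_imp_inj by simp
  define \<beta> where "\<beta> = hol_aut (nu G N h)"
  have \<beta>: "\<beta> \<in> hom PG PG" "nu G N h \<in> Hol G"
    unfolding \<beta>_def using hol_aut_hom_PG nu_in_Hol h by auto
  define w' where "w' = \<beta> (nu_left w) \<otimes> conjugate h (\<beta> (nu_right w))"
  have w': "nu_left w' = \<beta> (nu_left w)" "nu_right w' = conjugate h (\<beta> (nu_right w))"
    using nu_conjugate_by_nu[OF h w(1)] unfolding \<beta>_def w'_def by simp_all
  have w'_P: "w' \<in> P"
    unfolding w'_def using \<beta>(1) nu_left_P nu_right_P w(1) P_endo_closed conjugate_P[OF h]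
      subgroup.m_closed[OF subgroup_P] by metis
  have "nu_left w' = nu_left (\<beta> w)" using w' P_endo_commute[OF nu_left_hom \<beta>(1) w(1)] by simp
  hence "w' = \<beta> w" using inj_onD[OF left_inj] w'_P P_endo_closed[OF \<beta>(1) w(1)] by blast
  hence "conjugate h (\<beta> (nu_right w)) = \<beta> (nu_right w)"
    using w' P_endo_commute[OF nu_right_hom \<beta>(1) w(1)] by simp
  moreover have v: "\<beta> (nu_right w) \<in> P" using P_endo_closed[OF \<beta>(1) nu_right_P[OF w(1)]] .
  ultimately have "\<beta> (nu_right w) \<otimes> h = h \<otimes> \<beta> (nu_right w)"
    using h P_carrier by (metis conjugate_def inv_solve_left m_assoc inv_closed m_closed)
  moreover have "\<beta> (nu_right w) \<noteq> \<one>"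
    using no_kernel w hol_aut_inj[OF \<beta>(2)] hol_aut_one[OF \<beta>(2)] nu_right_P P_carrier
    unfolding \<beta>_def by (metis inj_onD one_closed)
  ultimately show False using commute_P_generator[OF v _ h _ u] hu by blast
qed

end

lemma nu_P_eq_rho_or_lam: "nu G N ` P = rho G ` P \<or> nu G N ` P = lam G ` P"
  using nu_P_eq_rho_if_central nu_P_eq_rho_if_left_kernel nu_P_eq_lam_if_right_kernel
    nu_left_or_right_kernel by blast

lemma comm_subgroup_rho_nu_P: "comm_subgroup S (rho G ` carrier G) (nu G N ` P) \<subseteq> nu G N ` P"
  unfolding comm_subgroup_def
proof (rule SymR.generate_subgroup_incl[OF _ subgroup_nu_P], rule subsetI)
  fix z assume "z \<in> {commR S a b |a b. a \<in> rho G ` carrier G \<and> b \<in> nu G N ` P}"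
  then obtain x b where x: "x \<in> carrier G" and b: "b \<in> nu G N ` P" and z: "z = commR S (rho G x) b"
    by blast
  from nu_P_eq_rho_or_lam show "z \<in> nu G N ` P"
  proof
    assume rho: "nu G N ` P = rho G ` P"
    then obtain u where u: "u \<in> P" and bu: "b = rho G u" using b by auto
    have "inv x \<otimes> inv u \<otimes> x \<otimes> u \<in> P"
      using P_normal[OF x] u subgroup_P by (simp add: subgroup.m_inv_closed subgroup.m_closed)
    thus ?thesis using commR_rho[OF x P_carrier[OF u]] rho bu z by simp
  next
    assume "nu G N ` P = lam G ` P"
    then obtain u where "u \<in> P" and "b = lam G u" using b by auto
    thus ?thesis using commR_rho_lam[OF x P_carrier] subgroup.one_closed[OF subgroup_nu_P] z by simp
  qed
qed

end

theorem mainTheorem18: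
  fixes G :: "('a, 'b) monoid_scheme" and p m :: nat and P M :: "'a set"
    and N :: "('a \<Rightarrow> 'a) set"
  assumes "group G"
    and "Factorial_Ring.prime p"
    and "order G = m * p" and "finite (carrier G)"
    and "\<not> p dvd m"
    and "sylow_subgroup p P G"
    and "\<And>Q. sylow_subgroup p Q G \<Longrightarrow> Q = P"
    and "subgroup M G" and "card M = m"
    and "\<not> p dvd card (auto (G\<lparr>carrier := M\<rparr>))"
    and "N \<subseteq> Hol G" and "regular_subgroup (carrier G) N"
  shows "subgroup (nu G N ` P) ((SymR (carrier G))\<lparr>carrier := N\<rparr>)
       \<and> sylow_subgroup p (nu G N ` P) ((SymR (carrier G))\<lparr>carrier := N\<rparr>)
       \<and> (nu G N ` P = rho G ` P \<or> nu G N ` P = lam G ` P)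
       \<and> comm_subgroup (SymR (carrier G)) (rho G ` carrier G) (nu G N ` P) \<subseteq> nu G N ` P"
proof -
  interpret sylow_holomorph G N p m P M
    by (intro sylow_holomorph.intro regular_holomorph.intro regular_holomorph_axioms.intro
        sylow_holomorph_axioms.intro assms)
  show ?thesis
    using subgroup_nu_P_N sylow_nu_P_N nu_P_eq_rho_or_lam comm_subgroup_rho_nu_P by blast
qed

end
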